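(* For the English Walrasian mechanism with valuation space $\mathcal{V}=\textsc{Gs}$ and bidding space $\mathcal{B}=\textsc{Gs}$, the Price of Stability is $1$; that is, for every profile $\mathbf{v}\in\textsc{Gs}^n$ of true valuations there exists a pure Nash equilibrium $\mathbf{b}$ with $\sum_i v_i(\mathbf{x}_i(\mathbf{b}))=\max\{\sum_i v_i(\mathbf{y}_i):(\mathbf{y}_i)_i \text{ a partition of the items}\}$.
   Context: There are $m$ items and $n$ agents. A valuation is $v:\{0,1\}^m\to\mathbb{R}_+$ with $v(\mathbf{0})=0$, monotone; extended to $\mathbb{Z}^m_+$ by $v(\mathbf{x})=v(\min(\mathbf{x},\mathbf{1}))$. Demand at prices $\mathbf{p}$: $D_v(\mathbf{p})=\arg\max_{\mathbf{x}\in\{0,1\}^m}[v(\mathbf{x})-\mathbf{p}\cdot\mathbf{x}]$. $v\in\textsc{Gs}$ (gross substitutes) if for all prices $\mathbf{p}\le\mathbf{q}$, $S=\{j:p_j=q_j\}$, and $\mathbf{x}\in D_v(\mathbf{p})$, there is $\mathbf{y}\in D_v(\mathbf{q})$ with $y_j\ge x_j$ for all $j\in S$. For declared $\mathbf{b}=(b_1,\dots,b_n)$, $W^{\mathbf{b}}(\mathbf{x})=\max\{\sum_i b_i(\mathbf{x}_i):\sum_i\mathbf{x}_i\le\mathbf{x},\mathbf{x}_i\in\{0,1\}^m\}$ for $\mathbf{x}\in\mathbb{Z}^m_+$, and $f(\mathbf{y}\mid\mathbf{x})=f(\mathbf{y}+\mathbf{x})-f(\mathbf{x})$. English Walrasian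 mechanism: agents report $b_i\in\mathcal{B}$; allocation is a partition maximizing $\sum_i b_i(\mathbf{x}_i)$; payment $\pi_i(\mathbf{b})=\sum_{j: x_{ij}(\mathbf{b})=1}W^{\mathbf{b}}(\mathbf{1}_j\mid\mathbf{1})$. Utility $u_i(v_i;\mathbf{b})=v_i(\mathbf{x}_i(\mathbf{b}))-\pi_i(\mathbf{b})$. Pure Nash equilibrium: no agent can increase his utility by unilaterally changing his report within $\mathcal{B}$. The Price of Stability is $\max_{\mathbf{v}}\min_{\mathbf{b}\in\textsc{Nash}(\mathbf{v})}\frac{\sum_i v_i(\mathbf{x}^*_i(\mathbf{v}))}{\sum_i v_i(\mathbf{x}_i(\mathbf{b}))}$ where $\mathbf{x}^*(\mathbf{v})$ is a welfare-maximizing partition (taken to be $1$ if no Nash equilibrium exists). *)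

theory Defs
  imports Complex_Main
begin

(* Items are 0..<m, agents are 0..<n. A bundle in {0,1}^m is a subset of {..<m};
   a valuation / bid is a function on bundles (values outside subsets of {..<m} are irrelevant). *)

type_synonym valuation = "nat set \<Rightarrow> real"
type_synonym profile = "nat \<Rightarrow> valuation"
type_synonym allocation = "nat \<Rightarrow> nat set"

definition is_valuation :: "nat \<Rightarrow> valuation \<Rightarrow> bool" where
  "is_valuation m v \<longleftrightarrow> v {} = 0 \<and> (\<forall>S. S \<subseteq> {..<m} \<longrightarrow> v S \<ge> 0)
     \<and> (\<forall>S T. S \<subseteq> T \<and> T \<subseteq> {..<m} \<longrightarrow> v S \<le> v T)"

definition demand :: "nat \<Rightarrow> valuation \<Rightarrow> (nat \<Rightarrow> real) \<Rightarrow> nat set set" where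
  "demand m v p = {X. X \<subseteq> {..<m} \<and>
      (\<forall>Y. Y \<subseteq> {..<m} \<longrightarrow> v Y - (\<Sum>j\<in>Y. p j) \<le> v X - (\<Sum>j\<in>X. p j))}"

definition gross_substitutes :: "nat \<Rightarrow> valuation \<Rightarrow> bool" where
  "gross_substitutes m v \<longleftrightarrow> is_valuation m v \<and>
     (\<forall>p q. (\<forall>j<m. p j \<le> q j) \<longrightarrow>
        (\<forall>X \<in> demand m v p. \<exists>Y \<in> demand m v q.
            \<forall>j<m. p j = q j \<and> j \<in> X \<longrightarrow> j \<in> Y))"

definition is_partition :: "nat \<Rightarrow> nat \<Rightarrow> allocation \<Rightarrow> bool" where
  "is_partition m n x \<longleftrightarrow> (\<forall>i<n. x i \<subseteq> {..<m})
     \<and> (\<forall>i<n. \<forall>k<n. i \<noteq> k \<longrightarrow> x i \<inter> x k = {})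
     \<and> (\<Union>i<n. x i) = {..<m}"

definition welfare :: "nat \<Rightarrow> profile \<Rightarrow> allocation \<Rightarrow> real" where
  "welfare n v x = (\<Sum>i<n. v i (x i))"

definition opt_welfare :: "nat \<Rightarrow> nat \<Rightarrow> profile \<Rightarrow> real" where
  "opt_welfare m n v = Max {welfare n v y | y. is_partition m n y}"

definition optimal_allocation :: "nat \<Rightarrow> nat \<Rightarrow> profile \<Rightarrow> allocation \<Rightarrow> bool" where
  "optimal_allocation m n b x \<longleftrightarrow> is_partition m n x \<and>
     (\<forall>y. is_partition m n y \<longrightarrow> welfare n b y \<le> welfare n b x)"

(* W^b(x) for a multiplicity vector x \<in> Z_+^m (given as nat \<Rightarrow> nat, only j < m matters):
   maximum of \<Sum>_i b_i(x_i) over binary bundles x_i with \<Sum>_i x_i \<le> x. *)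
definition W :: "nat \<Rightarrow> nat \<Rightarrow> profile \<Rightarrow> (nat \<Rightarrow> nat) \<Rightarrow> real" where
  "W m n b x = Max {(\<Sum>i<n. b i (S i)) | S.
      (\<forall>i<n. S i \<subseteq> {..<m}) \<and> (\<forall>j<m. card {i. i < n \<and> j \<in> S i} \<le> x j)}"

definition ones :: "nat \<Rightarrow> nat" where "ones = (\<lambda>_. 1)"

definition ones_plus :: "nat \<Rightarrow> nat \<Rightarrow> nat" where
  "ones_plus j = (\<lambda>k. if k = j then 2 else 1)"

definition item_price :: "nat \<Rightarrow> nat \<Rightarrow> profile \<Rightarrow> nat \<Rightarrow> real" where
  "item_price m n b j = W m n b (ones_plus j) - W m n b ones"

definition payment :: "nat \<Rightarrow> nat \<Rightarrow> (profile \<Rightarrow> allocation) \<Rightarrow> profile \<Rightarrow> nat \<Rightarrow> real" where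
  "payment m n alloc b i = (\<Sum>j\<in>alloc b i. item_price m n b j)"

definition utility :: "nat \<Rightarrow> nat \<Rightarrow> (profile \<Rightarrow> allocation) \<Rightarrow> valuation \<Rightarrow> profile \<Rightarrow> nat \<Rightarrow> real" where
  "utility m n alloc vi b i = vi (alloc b i) - payment m n alloc b i"

definition is_nash_gs :: "nat \<Rightarrow> nat \<Rightarrow> (profile \<Rightarrow> allocation) \<Rightarrow> profile \<Rightarrow> profile \<Rightarrow> bool" where
  "is_nash_gs m n alloc v b \<longleftrightarrow> (\<forall>i<n. gross_substitutes m (b i)) \<and>
     (\<forall>i<n. \<forall>b'. gross_substitutes m b' \<longrightarrow>
        utility m n alloc (v i) (b(i := b')) i \<le> utility m n alloc (v i) b i)"

end

theory Submission
  imports Defs "HOL-Library.FuncSet"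
begin

text \<open>Fix a welfare-maximising partition \<open>y\<close> for the true valuations and let every agent \<open>k\<close> bid the
additive, hence gross-substitutes, valuation \<open>S \<mapsto> H \<cdot> |S \<inter> y k|\<close>, where \<open>H\<close> exceeds every true
value. The mechanism then allocates \<open>y\<close> at price zero, since a second copy of an item adds no declared
value. A deviating agent \<open>i\<close> who still receives a subset of \<open>y i\<close> gains nothing by monotonicity. If
instead he receives an item \<open>j \<in> y k\<close> with \<open>k \<noteq> i\<close>, then a second copy of \<open>j\<close> given to \<open>k\<close>
raises the declared welfare by \<open>H\<close>, so \<open>j\<close> alone costs more than any bundle is worth to \<open>i\<close>.\<close>

lemma finite_bundle_sums:
  fixes b :: profile
  assumes "finite B"
  shows "finite {(\<Sum>i<n. b i (S i)) | S. (\<forall>i<n. S i \<subseteq> B) \<and> P S}"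
proof (rule finite_subset)
  let ?sums = "(\<lambda>S. \<Sum>i<n. b i (S i)) ` PiE {..<n} (\<lambda>_. Pow B)"
  show "{(\<Sum>i<n. b i (S i)) | S. (\<forall>i<n. S i \<subseteq> B) \<and> P S} \<subseteq> ?sums"
  proof clarify
    fix S assume "\<forall>i<n. S i \<subseteq> B"
    then have "restrict S {..<n} \<in> PiE {..<n} (\<lambda>_. Pow B)" by (simp add: PiE_iff)
    moreover have "(\<Sum>i<n. b i (S i)) = (\<Sum>i<n. b i (restrict S {..<n} i))" by simp
    ultimately show "(\<Sum>i<n. b i (S i)) \<in> ?sums" by blast
  qed
  show "finite ?sums" using assms by (intro finite_imageI finite_PiE) auto
qed

lemma sum_le_W:
  assumes "\<forall>i<n. S i \<subseteq> {..<m}" and "\<forall>j<m. card {i. i < n \<and> j \<in> S i} \<le> x j"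
  shows "(\<Sum>i<n. b i (S i)) \<le> W m n b x"
  unfolding W_def using assms by (intro Max_ge finite_bundle_sums) blast+

lemma W_le:
  assumes "\<And>S. \<forall>i<n. S i \<subseteq> {..<m} \<Longrightarrow> \<forall>j<m. card {i. i < n \<and> j \<in> S i} \<le> x j
      \<Longrightarrow> (\<Sum>i<n. b i (S i)) \<le> c"
  shows "W m n b x \<le> c"
  unfolding W_def
proof (rule Max.boundedI)
  have "(\<Sum>i<n. b i {}) \<in> {(\<Sum>i<n. b i (S i)) | S. (\<forall>i<n. S i \<subseteq> {..<m})
      \<and> (\<forall>j<m. card {i. i < n \<and> j \<in> S i} \<le> x j)}"
    by (intro CollectI exI[of _ "\<lambda>_. {}"]) simp
  then show "{(\<Sum>i<n. b i (S i)) | S. (\<forall>i<n. S i \<subseteq> {..<m})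
      \<and> (\<forall>j<m. card {i. i < n \<and> j \<in> S i} \<le> x j)} \<noteq> {}" by blast
qed (use assms in \<open>auto intro: finite_bundle_sums\<close>)

lemma W_mono:
  assumes "\<forall>j<m. x j \<le> y j"
  shows "W m n b x \<le> W m n b y"
  by (rule W_le, rule sum_le_W) (use assms in \<open>auto intro: le_trans\<close>)

lemma item_price_nonneg: "0 \<le> item_price m n b j"
  unfolding item_price_def using W_mono[of m ones "ones_plus j"]
  by (simp add: ones_def ones_plus_def)

lemma is_partitionD:
  assumes "is_partition m n x"
  shows partition_subset: "i < n \<Longrightarrow> x i \<subseteq> {..<m}"
    and partition_disjoint: "i < n \<Longrightarrow> k < n \<Longrightarrow> i \<noteq> k \<Longrightarrow> x i \<inter> x k = {}"
    and partition_cover: "j < m \<Longrightarrow> \<exists>k<n. j \<in> x k"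
proof -
  show "i < n \<Longrightarrow> x i \<subseteq> {..<m}" using assms unfolding is_partition_def by blast
  show "i < n \<Longrightarrow> k < n \<Longrightarrow> i \<noteq> k \<Longrightarrow> x i \<inter> x k = {}"
    using assms unfolding is_partition_def by blast
  show "j < m \<Longrightarrow> \<exists>k<n. j \<in> x k"
    using assms unfolding is_partition_def by (metis UN_iff lessThan_iff)
qed

lemma card_owners_partition_le_1:
  assumes "is_partition m n x"
  shows "card {i. i < n \<and> j \<in> x i} \<le> 1"
proof -
  have "i = k" if "i \<in> {i. i < n \<and> j \<in> x i}" "k \<in> {i. i < n \<and> j \<in> x i}" for i k
    using that assms unfolding is_partition_def by blast
  then show ?thesis by (simp add: card_le_Suc0_iff_eq)
qed

lemma sum_card_partition:
  assumes "is_partition m n x"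
  shows "(\<Sum>i<n. card (x i)) = m"
proof -
  have "card (\<Union>i<n. x i) = (\<Sum>i<n. card (x i))"
    using assms unfolding is_partition_def
    by (intro card_UN_disjoint) (auto intro: finite_subset[of _ "{..<m}"])
  with assms show ?thesis unfolding is_partition_def by simp
qed

lemma partition_subset_imp_eq:
  assumes x: "is_partition m n x" and y: "is_partition m n y" and sub: "\<forall>i<n. x i \<subseteq> y i"
  shows "\<forall>i<n. x i = y i"
proof (intro allI impI equalityI)
  fix i assume "i < n"
  then show "x i \<subseteq> y i" using sub by blast
  show "y i \<subseteq> x i"
  proof
    fix j assume "j \<in> y i"
    with partition_subset[OF y \<open>i < n\<close>] partition_cover[OF x] obtain k where "k < n" "j \<in> x k"
      by blast
    with sub have "j \<in> y k" by blast
    with partition_disjoint[OF y \<open>i < n\<close> \<open>k < n\<close>] \<open>j \<in> y i\<close> have "k = i" by blast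
    with \<open>j \<in> x k\<close> show "j \<in> x i" by simp
  qed
qed

lemma disjoint_bundles_extend_to_partition:
  assumes "0 < n" and sub: "\<forall>i<n. S i \<subseteq> {..<m}"
    and disj: "\<forall>i<n. \<forall>k<n. i \<noteq> k \<longrightarrow> S i \<inter> S k = {}"
  obtains x where "is_partition m n x" and "\<forall>i<n. S i \<subseteq> x i"
proof
  define R where "R = {..<m} - (\<Union>i<n. S i)"
  define x where "x = S(0 := S 0 \<union> R)"
  show S_x: "\<forall>i<n. S i \<subseteq> x i" by (simp add: x_def)
  have R_disj: "R \<inter> S k = {}" if "k < n" for k using that by (auto simp: R_def)
  have "x i \<subseteq> {..<m}" if "i < n" for i using sub that by (simp add: x_def R_def)
  moreover have "x i \<inter> x k = {}" if "i < n" "k < n" "i \<noteq> k" for i k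
    using disj R_disj[of i] R_disj[of k] that by (auto simp: x_def)
  moreover have "{..<m} \<subseteq> (\<Union>i<n. x i)"
  proof
    fix j assume "j \<in> {..<m}"
    show "j \<in> (\<Union>i<n. x i)"
    proof (cases "j \<in> R")
      case True
      then show ?thesis using \<open>0 < n\<close> by (auto simp: x_def)
    next
      case False
      with \<open>j \<in> {..<m}\<close> obtain i where "i < n" "j \<in> S i" by (auto simp: R_def)
      with S_x show ?thesis by blast
    qed
  qed
  ultimately show "is_partition m n x" unfolding is_partition_def by blast
qed

lemma welfare_le_W_ones:
  assumes "is_partition m n x"
  shows "welfare n b x \<le> W m n b ones"
  unfolding welfare_def
proof (rule sum_le_W)
  show "\<forall>i<n. x i \<subseteq> {..<m}" using assms by (simp add: is_partition_def)
  show "\<forall>j<m. card {i. i < n \<and> j \<in> x i} \<le> ones j"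
    using card_owners_partition_le_1[OF assms] by (simp add: ones_def)
qed

lemma W_ones_le_optimal_welfare:
  assumes "0 < n" and val: "\<forall>i<n. is_valuation m (b i)" and opt: "optimal_allocation m n b x"
  shows "W m n b ones \<le> welfare n b x"
proof (rule W_le)
  fix S assume sub: "\<forall>i<n. S i \<subseteq> {..<m}"
    and single: "\<forall>j<m. card {i. i < n \<and> j \<in> S i} \<le> ones j"
  have "S i \<inter> S k = {}" if "i < n" "k < n" "i \<noteq> k" for i k
  proof (rule ccontr)
    assume "S i \<inter> S k \<noteq> {}"
    then obtain j where j: "j \<in> S i" "j \<in> S k" by blast
    then have "card {i, k} \<le> card {i. i < n \<and> j \<in> S i}"
      using that by (intro card_mono) auto
    also have "\<dots> \<le> 1" using single sub j that by (auto simp: ones_def)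
    finally show False using that by simp
  qed
  then obtain y where y: "is_partition m n y" and Sy: "\<forall>i<n. S i \<subseteq> y i"
    using disjoint_bundles_extend_to_partition[OF \<open>0 < n\<close> sub] by blast
  have "(\<Sum>i<n. b i (S i)) \<le> welfare n b y"
    unfolding welfare_def
  proof (rule sum_mono)
    fix i assume "i \<in> {..<n}"
    then show "b i (S i) \<le> b i (y i)"
      using val Sy y unfolding is_valuation_def is_partition_def by simp
  qed
  also have "\<dots> \<le> welfare n b x" using opt y by (simp add: optimal_allocation_def)
  finally show "(\<Sum>i<n. b i (S i)) \<le> welfare n b x" .
qed

lemma marginal_value_le_item_price:
  assumes val: "\<forall>i<n. is_valuation m (b i)" and opt: "optimal_allocation m n b x"
    and "j < m" and "k < n" and "j \<notin> x k"
  shows "b k (insert j (x k)) - b k (x k) \<le> item_price m n b j"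
proof -
  have x: "is_partition m n x" using opt by (simp add: optimal_allocation_def)
  \<comment> \<open>\<open>k\<close> receives the second copy of \<open>j\<close> available under the supply \<open>1 + 1\<^sub>j\<close>.\<close>
  define S where "S = x(k := insert j (x k))"
  have "\<forall>i<n. S i \<subseteq> {..<m}" using x \<open>j < m\<close> by (simp add: S_def is_partition_def)
  moreover have "card {i. i < n \<and> j' \<in> S i} \<le> ones_plus j j'" for j'
  proof -
    have "card {i. i < n \<and> j' \<in> S i} \<le> card (insert k {i. i < n \<and> j' \<in> x i})"
      by (intro card_mono) (auto simp: S_def)
    also have "\<dots> \<le> Suc (card {i. i < n \<and> j' \<in> x i})" by (simp add: card_insert_if)
    finally have "card {i. i < n \<and> j' \<in> S i} \<le> 2"
      using card_owners_partition_le_1[OF x, of j'] by simp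
    moreover have "{i. i < n \<and> j' \<in> S i} = {i. i < n \<and> j' \<in> x i}" if "j' \<noteq> j"
      using that by (auto simp: S_def)
    ultimately show ?thesis
      using card_owners_partition_le_1[OF x, of j'] by (cases "j' = j") (simp_all add: ones_plus_def)
  qed
  ultimately have "(\<Sum>i<n. b i (S i)) \<le> W m n b (ones_plus j)" by (intro sum_le_W) auto
  moreover have "(\<Sum>i<n. b i (S i)) = welfare n b x + (b k (insert j (x k)) - b k (x k))"
  proof -
    have "(\<Sum>i<n. b i (S i) - b i (x i))
        = (\<Sum>i<n. if i = k then b k (insert j (x k)) - b k (x k) else 0)"
      by (intro sum.cong) (auto simp: S_def)
    also have "\<dots> = b k (insert j (x k)) - b k (x k)" using \<open>k < n\<close> by simp
    finally have "(\<Sum>i<n. b i (S i) - b i (x i)) = b k (insert j (x k)) - b k (x k)" .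
    then show ?thesis by (simp add: welfare_def sum_subtractf)
  qed
  moreover have "W m n b ones \<le> welfare n b x"
    using \<open>k < n\<close> val opt by (intro W_ones_le_optimal_welfare) auto
  ultimately show ?thesis unfolding item_price_def by linarith
qed

lemma item_price_le_payment:
  assumes "j \<in> alloc b i" and "finite (alloc b i)"
  shows "item_price m n b j \<le> payment m n alloc b i"
  unfolding payment_def using assms item_price_nonneg by (intro member_le_sum) auto

lemma payment_nonneg: "0 \<le> payment m n alloc b i"
  unfolding payment_def by (intro sum_nonneg item_price_nonneg)

lemma gross_substitutes_cong:
  assumes gs: "gross_substitutes m v" and eq: "\<forall>S. S \<subseteq> {..<m} \<longrightarrow> v S = v' S"
  shows "gross_substitutes m v'"
proof -
  have val: "is_valuation m v" using gs by (simp add: gross_substitutes_def)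
  have eq': "v' S = v S" if "S \<subseteq> {..<m}" for S using eq that by simp
  have "is_valuation m v'" unfolding is_valuation_def
  proof (intro conjI allI impI)
    show "v' {} = 0" using val eq'[of "{}"] by (simp add: is_valuation_def)
    show "0 \<le> v' S" if "S \<subseteq> {..<m}" for S using val that by (simp add: is_valuation_def eq')
    show "v' S \<le> v' T" if "S \<subseteq> T \<and> T \<subseteq> {..<m}" for S T
    proof -
      have "S \<subseteq> {..<m}" using that by blast
      then show ?thesis using val that by (simp add: is_valuation_def eq')
    qed
  qed
  moreover have "demand m v' p = demand m v p" for p by (auto simp: demand_def eq')
  ultimately show ?thesis using gs unfolding gross_substitutes_def by simp
qed

lemma demand_additive:
  "demand m (\<lambda>S. \<Sum>j\<in>S. w j) p =
     {X. X \<subseteq> {..<m} \<and> (\<forall>Y. Y \<subseteq> {..<m} \<longrightarrow> (\<Sum>j\<in>Y. w j - p j) \<le> (\<Sum>j\<in>X. w j - p j))}"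
  unfolding demand_def by (simp add: sum_subtractf)

lemma sum_le_sum_covering_positives:
  fixes f :: "'a \<Rightarrow> real"
  assumes "finite Z" and "finite Y" and pos: "\<forall>j\<in>Z. 0 < f j \<longrightarrow> j \<in> Y" and nonneg: "\<forall>j\<in>Y. 0 \<le> f j"
  shows "sum f Z \<le> sum f Y"
proof -
  have "sum f Z = sum f (Z \<inter> Y) + sum f (Z - Y)" using \<open>finite Z\<close> by (rule sum.Int_Diff)
  also have "sum f (Z - Y) \<le> 0" using pos by (intro sum_nonpos) (auto simp: not_less)
  also have "sum f (Z \<inter> Y) \<le> sum f Y" using \<open>finite Y\<close> nonneg by (intro sum_mono2) auto
  finally show ?thesis by simp
qed

lemma gross_substitutes_additive:
  assumes "\<forall>j<m. 0 \<le> w j"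
  shows "gross_substitutes m (\<lambda>S. \<Sum>j\<in>S. w j)"
  unfolding gross_substitutes_def
proof (intro conjI allI impI ballI)
  show "is_valuation m (\<lambda>S. \<Sum>j\<in>S. w j)"
    using assms unfolding is_valuation_def
    by (auto intro!: sum_nonneg sum_mono2 intro: finite_subset[of _ "{..<m}"])
  fix p q X assume "X \<in> demand m (\<lambda>S. \<Sum>j\<in>S. w j) p"
  then have X: "X \<subseteq> {..<m}"
    and X_max: "\<And>Y. Y \<subseteq> {..<m} \<Longrightarrow> (\<Sum>j\<in>Y. w j - p j) \<le> (\<Sum>j\<in>X. w j - p j)"
    by (auto simp: demand_additive)
  have X_profitable: "p j \<le> w j" if "j \<in> X" for j
  proof -
    have "(\<Sum>i\<in>X - {j}. w i - p i) \<le> (\<Sum>i\<in>X. w i - p i)" using X by (intro X_max) blast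
    then show ?thesis using that sum.remove[OF finite_subset[OF X] that, of "\<lambda>i. w i - p i"] by simp
  qed
  define Y where "Y = {j. j < m \<and> q j < w j} \<union> {j \<in> X. p j = q j}"
  have "Y \<subseteq> {..<m}" using X by (auto simp: Y_def)
  moreover have "(\<Sum>j\<in>Z. w j - q j) \<le> (\<Sum>j\<in>Y. w j - q j)" if "Z \<subseteq> {..<m}" for Z
    using that \<open>Y \<subseteq> {..<m}\<close> X_profitable
    by (intro sum_le_sum_covering_positives) (auto simp: Y_def intro: finite_subset dest: X_profitable)
  ultimately have "Y \<in> demand m (\<lambda>S. \<Sum>j\<in>S. w j) q" by (simp add: demand_additive)
  moreover have "\<forall>j<m. p j = q j \<and> j \<in> X \<longrightarrow> j \<in> Y" by (simp add: Y_def)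
  ultimately show "\<exists>Y\<in>demand m (\<lambda>S. \<Sum>j\<in>S. w j) q. \<forall>j<m. p j = q j \<and> j \<in> X \<longrightarrow> j \<in> Y"
    by blast
qed

definition maximizes_declared_welfare :: "nat \<Rightarrow> nat \<Rightarrow> (profile \<Rightarrow> allocation) \<Rightarrow> bool" where
  "maximizes_declared_welfare m n alloc \<longleftrightarrow>
     (\<forall>b. (\<forall>i<n. gross_substitutes m (b i)) \<longrightarrow> optimal_allocation m n b (alloc b))"

definition target_bids :: "real \<Rightarrow> allocation \<Rightarrow> profile" where
  "target_bids H y = (\<lambda>k S. H * real (card (S \<inter> y k)))"

lemma gross_substitutes_target_bids:
  assumes "0 \<le> H"
  shows "gross_substitutes m (target_bids H y k)"
proof (rule gross_substitutes_cong)
  show "gross_substitutes m (\<lambda>S. \<Sum>j\<in>S. if j \<in> y k then H else 0)"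
    using assms by (intro gross_substitutes_additive) simp
  show "\<forall>S. S \<subseteq> {..<m} \<longrightarrow> (\<Sum>j\<in>S. if j \<in> y k then H else 0) = target_bids H y k S"
  proof (intro allI impI)
    fix S :: "nat set" assume "S \<subseteq> {..<m}"
    then have "finite S" by (rule finite_subset) simp
    then have "(\<Sum>j\<in>S. if j \<in> y k then H else 0) = (\<Sum>j\<in>S \<inter> y k. H)"
      by (rule sum.inter_restrict[symmetric])
    then show "(\<Sum>j\<in>S. if j \<in> y k then H else 0) = target_bids H y k S"
      by (simp add: target_bids_def)
  qed
qed

lemma welfare_target_bids:
  "welfare n (target_bids H y) x = H * (\<Sum>i<n. real (card (x i \<inter> y i)))"
  by (simp add: welfare_def target_bids_def sum_distrib_left)

lemma target_bids_insert:
  assumes "finite (y k)" and "j \<in> y k" and "j \<notin> S"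
  shows "target_bids H y k (insert j S) = target_bids H y k S + H"
proof -
  have "insert j S \<inter> y k = insert j (S \<inter> y k)" using \<open>j \<in> y k\<close> by blast
  then show ?thesis using assms by (simp add: target_bids_def algebra_simps)
qed

lemma optimal_allocation_target_bids:
  assumes "0 < H" and y: "is_partition m n y" and opt: "optimal_allocation m n (target_bids H y) x"
  shows "\<forall>i<n. x i = y i"
proof -
  have x: "is_partition m n x" using opt by (simp add: optimal_allocation_def)
  have "\<forall>i<n. x i \<subseteq> y i"
  proof (rule ccontr)
    assume "\<not> (\<forall>i<n. x i \<subseteq> y i)"
    then obtain i where "i < n" and "\<not> x i \<subseteq> y i" by blast
    have finite_x: "finite (x k)" if "k < n" for k
      using partition_subset[OF x that] by (rule finite_subset) simp
    have "(\<Sum>k<n. card (x k \<inter> y k)) < (\<Sum>k<n. card (x k))"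
    proof (rule sum_strict_mono_ex1)
      show "\<forall>k\<in>{..<n}. card (x k \<inter> y k) \<le> card (x k)" using finite_x by (simp add: card_mono)
      show "\<exists>k\<in>{..<n}. card (x k \<inter> y k) < card (x k)"
        using \<open>i < n\<close> \<open>\<not> x i \<subseteq> y i\<close> finite_x by (intro bexI[of _ i] psubset_card_mono) auto
    qed simp
    then have "welfare n (target_bids H y) x < welfare n (target_bids H y) y"
      using \<open>0 < H\<close> sum_card_partition[OF x] sum_card_partition[OF y]
      by (simp add: welfare_target_bids flip: of_nat_sum)
    with opt y show False by (simp add: optimal_allocation_def not_le[symmetric])
  qed
  then show ?thesis using partition_subset_imp_eq[OF x y] by blast
qed

lemma alloc_target_bids:
  assumes alloc_opt: "maximizes_declared_welfare m n alloc"
    and "0 < H" and "is_partition m n y"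
  shows "\<forall>i<n. alloc (target_bids H y) i = y i"
  using assms gross_substitutes_target_bids[of H]
  by (intro optimal_allocation_target_bids) (auto simp: maximizes_declared_welfare_def)

lemma item_price_target_bids_nonpos:
  assumes "0 \<le> H" and y: "is_partition m n y"
  shows "item_price m n (target_bids H y) j \<le> 0"
proof -
  have "W m n (target_bids H y) (ones_plus j) \<le> H * real m"
  proof (rule W_le)
    fix S
    have "(\<Sum>i<n. target_bids H y i (S i)) \<le> (\<Sum>i<n. H * real (card (y i)))"
      using y \<open>0 \<le> H\<close> unfolding target_bids_def is_partition_def
      by (intro sum_mono mult_left_mono) (auto intro!: card_mono intro: finite_subset)
    also have "\<dots> = H * real m"
      using sum_card_partition[OF y] by (simp add: sum_distrib_left[symmetric] flip: of_nat_sum)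
    finally show "(\<Sum>i<n. target_bids H y i (S i)) \<le> H * real m" .
  qed
  also have "H * real m = welfare n (target_bids H y) y"
    using sum_card_partition[OF y] by (simp add: welfare_target_bids flip: of_nat_sum)
  also have "\<dots> \<le> W m n (target_bids H y) ones" using y by (rule welfare_le_W_ones)
  finally show ?thesis unfolding item_price_def by simp
qed

lemma deviation_from_target_bids_unprofitable:
  assumes alloc_opt: "maximizes_declared_welfare m n alloc"
    and val: "\<forall>i<n. is_valuation m (v i)" and y: "is_partition m n y"
    and "0 < H" and H: "\<forall>i<n. \<forall>T. T \<subseteq> {..<m} \<longrightarrow> v i T < H"
    and "i < n" and "gross_substitutes m b'"
  shows "utility m n alloc (v i) ((target_bids H y)(i := b')) i \<le> v i (y i)"
proof -
  define c where "c = (target_bids H y)(i := b')"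
  define x where "x = alloc c"
  have "\<forall>k<n. gross_substitutes m (c k)"
    using \<open>0 < H\<close> \<open>gross_substitutes m b'\<close> by (simp add: c_def gross_substitutes_target_bids)
  then have c_val: "\<forall>k<n. is_valuation m (c k)" and opt: "optimal_allocation m n c x"
    using alloc_opt by (auto simp: x_def gross_substitutes_def maximizes_declared_welfare_def)
  then have x: "is_partition m n x" by (simp add: optimal_allocation_def)
  then have x_i: "x i \<subseteq> {..<m}" using \<open>i < n\<close> by (simp add: is_partition_def)
  show ?thesis
  proof (cases "x i \<subseteq> y i")
    case True
    have "utility m n alloc (v i) c i \<le> v i (x i)"
      using payment_nonneg by (simp add: utility_def x_def)
    also have "\<dots> \<le> v i (y i)"
      using True val y \<open>i < n\<close> by (simp add: is_valuation_def is_partition_def)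
    finally show ?thesis by (simp add: c_def)
  next
    case False
    then obtain j where "j \<in> x i" and "j \<notin> y i" by blast
    with x_i partition_cover[OF y] obtain k where "k < n" and "j \<in> y k" by blast
    with \<open>j \<notin> y i\<close> have "k \<noteq> i" by blast
    with partition_disjoint[OF x \<open>i < n\<close> \<open>k < n\<close>] \<open>j \<in> x i\<close> have "j \<notin> x k" by blast
    have "finite (y k)" using partition_subset[OF y \<open>k < n\<close>] by (rule finite_subset) simp
    then have "H = c k (insert j (x k)) - c k (x k)"
      using \<open>k \<noteq> i\<close> \<open>j \<in> y k\<close> \<open>j \<notin> x k\<close> by (simp add: c_def target_bids_insert)
    also have "\<dots> \<le> item_price m n c j"
      using c_val opt x_i \<open>j \<in> x i\<close> \<open>k < n\<close> \<open>j \<notin> x k\<close> by (intro marginal_value_le_item_price) auto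
    also have "\<dots> \<le> payment m n alloc c i"
      using \<open>j \<in> x i\<close> finite_subset[OF x_i] by (intro item_price_le_payment) (simp_all add: x_def)
    finally have "utility m n alloc (v i) c i \<le> v i (x i) - H" by (simp add: utility_def x_def)
    also have "\<dots> < 0" using H \<open>i < n\<close> x_i by simp
    also have "0 \<le> v i (y i)" using val y \<open>i < n\<close> by (simp add: is_valuation_def is_partition_def)
    finally show ?thesis by (simp add: c_def)
  qed
qed

lemma nash_target_bids:
  assumes alloc_opt: "maximizes_declared_welfare m n alloc"
    and val: "\<forall>i<n. is_valuation m (v i)" and y: "is_partition m n y"
    and "0 < H" and H: "\<forall>i<n. \<forall>T. T \<subseteq> {..<m} \<longrightarrow> v i T < H"
  shows "is_nash_gs m n alloc v (target_bids H y)"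
  unfolding is_nash_gs_def
proof (intro conjI allI impI)
  show "gross_substitutes m (target_bids H y i)" for i
    using \<open>0 < H\<close> by (simp add: gross_substitutes_target_bids)
  fix i b' assume "i < n" and "gross_substitutes m b'"
  have "payment m n alloc (target_bids H y) i \<le> 0"
    unfolding payment_def using \<open>0 < H\<close> y by (intro sum_nonpos item_price_target_bids_nonpos) auto
  then have "v i (y i) \<le> utility m n alloc (v i) (target_bids H y) i"
    using alloc_target_bids[OF alloc_opt \<open>0 < H\<close> y] \<open>i < n\<close> by (simp add: utility_def)
  moreover note deviation_from_target_bids_unprofitable[OF alloc_opt val y \<open>0 < H\<close> H \<open>i < n\<close>
      \<open>gross_substitutes m b'\<close>]
  ultimately show "utility m n alloc (v i) ((target_bids H y)(i := b')) i
      \<le> utility m n alloc (v i) (target_bids H y) i" by linarith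
qed

lemma opt_welfare_attained:
  assumes "is_partition m n x"
  obtains y where "is_partition m n y" and "welfare n v y = opt_welfare m n v"
proof -
  let ?welfares = "{welfare n v y | y. is_partition m n y}"
  have "?welfares = {(\<Sum>i<n. v i (y i)) | y. (\<forall>i<n. y i \<subseteq> {..<m}) \<and> is_partition m n y}"
    by (auto simp: welfare_def is_partition_def)
  then have "finite ?welfares" by (simp add: finite_bundle_sums)
  moreover have "?welfares \<noteq> {}" using assms by blast
  ultimately have "opt_welfare m n v \<in> ?welfares" unfolding opt_welfare_def by (rule Max_in)
  then obtain y where "is_partition m n y" and "opt_welfare m n v = welfare n v y" by blast
  with that show ?thesis by simp
qed

lemma valuations_bounded:
  fixes v :: profile
  assumes val: "\<forall>i<n. is_valuation m (v i)"
  obtains H where "0 < H" and "\<forall>i<n. \<forall>T. T \<subseteq> {..<m} \<longrightarrow> v i T < H"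
proof
  let ?H = "1 + (\<Sum>i<n. v i {..<m})"
  have "0 \<le> (\<Sum>i<n. v i {..<m})" using val by (intro sum_nonneg) (simp add: is_valuation_def)
  then show "0 < ?H" by simp
  show "\<forall>i<n. \<forall>T. T \<subseteq> {..<m} \<longrightarrow> v i T < ?H"
  proof (intro allI impI)
    fix i T assume "i < n" and "T \<subseteq> {..<m}"
    then have "v i T \<le> v i {..<m}" using val by (simp add: is_valuation_def)
    also have "\<dots> \<le> (\<Sum>i<n. v i {..<m})"
      using val \<open>i < n\<close> by (intro member_le_sum) (simp_all add: is_valuation_def)
    finally show "v i T < ?H" by simp
  qed
qed

theorem corollary1:
  fixes m n :: nat and alloc :: "profile \<Rightarrow> allocation" and v :: profile
  assumes alloc_opt: "\<And>b. (\<forall>i<n. gross_substitutes m (b i)) \<Longrightarrow> optimal_allocation m n b (alloc b)"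
    and v_gs: "\<forall>i<n. gross_substitutes m (v i)"
  shows "\<exists>b. is_nash_gs m n alloc v b \<and> welfare n v (alloc b) = opt_welfare m n v"
proof -
  have rule: "maximizes_declared_welfare m n alloc"
    using alloc_opt by (simp add: maximizes_declared_welfare_def)
  \<comment> \<open>Partitions need not exist (\<open>n = 0 < m\<close>); the allocation rule applied to any GS profile provides one.\<close>
  have "is_partition m n (alloc (target_bids 0 (\<lambda>_. {})))"
    using alloc_opt[of "target_bids 0 (\<lambda>_. {})"]
    by (simp add: gross_substitutes_target_bids optimal_allocation_def)
  then obtain y where y: "is_partition m n y" and y_opt: "welfare n v y = opt_welfare m n v"
    by (rule opt_welfare_attained)
  have val: "\<forall>i<n. is_valuation m (v i)" using v_gs by (simp add: gross_substitutes_def)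
  then obtain H where "0 < H" and H: "\<forall>i<n. \<forall>T. T \<subseteq> {..<m} \<longrightarrow> v i T < H"
    by (rule valuations_bounded)
  have "welfare n v (alloc (target_bids H y)) = welfare n v y"
    using alloc_target_bids[OF rule \<open>0 < H\<close> y] by (simp add: welfare_def)
  with nash_target_bids[OF rule val y \<open>0 < H\<close> H] y_opt show ?thesis by auto
qed

end
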